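(* Let $K$ be a totally ordered quasi-field of characteristic $1$, $a\in K$, $n\ge 1$. Let $E=K+KX+\dots+KX^{n-1}\subset K[X]$ and let $\varphi:K[X]\to E$ be the $K$-linear map (additive and compatible with multiplication by scalars) defined on monomials by $\varphi(X^m)=a^qX^r$ where $m=nq+r$ with $0\le r<n$. Then a polynomial $P\in K[X]$ is $*$-singular for $\varphi$ if and only if $P$ belongs to the ideal $J$ of $K[X]$ generated by the polynomials $X^{nk}+a^k$, $k\ge1$.
   Context: A quasi-field of characteristic $1$ is a commutative semiring $K$ with $1+1=1$ in which every nonzero element is multiplicatively invertible; it is ordered by $u\le v$ iff $u+v=v$, totally ordered meaning the order is total. A polynomial $P\in K[X]$ is $*$-singular for $\varphi$ if one can write $P=P_1+P_2$ with $P_1,P_2$ having disjoint sets of monomials and $\varphi(P_1)=\varphi(P_2)$. *)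

theory Defs
  imports "HOL-Computational_Algebra.Polynomial"
begin

definition quasi_field_char1 :: "'a::comm_semiring_1 itself \<Rightarrow> bool" where
  "quasi_field_char1 _ \<longleftrightarrow> (1::'a) + 1 = 1 \<and> (\<forall>x::'a. x \<noteq> 0 \<longrightarrow> (\<exists>y. x * y = 1))"

text \<open>The order u \<le> v iff u + v = v is total.\<close>
definition totally_ordered_char1 :: "'a::comm_semiring_1 itself \<Rightarrow> bool" where
  "totally_ordered_char1 _ \<longleftrightarrow> (\<forall>u v::'a. u + v = v \<or> v + u = u)"

definition monomials :: "'a::zero poly \<Rightarrow> nat set" where
  "monomials P = {m. coeff P m \<noteq> 0}"

definition phi :: "'a::comm_semiring_1 \<Rightarrow> nat \<Rightarrow> 'a poly \<Rightarrow> 'a poly" where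
  "phi a n P = (\<Sum>m\<le>degree P. monom (coeff P m * a ^ (m div n)) (m mod n))"

definition star_singular :: "('a::comm_semiring_1 poly \<Rightarrow> 'a poly) \<Rightarrow> 'a poly \<Rightarrow> bool" where
  "star_singular f P \<longleftrightarrow> (\<exists>P1 P2. P = P1 + P2 \<and> monomials P1 \<inter> monomials P2 = {} \<and> f P1 = f P2)"

definition ideal_gen :: "'a::comm_semiring_1 set \<Rightarrow> 'a set" where
  "ideal_gen S = {p. \<exists>F Q. finite F \<and> F \<subseteq> S \<and> p = (\<Sum>g\<in>F. Q g * g)}"

end

theory Submission imports Defs begin

(*
  In a totally ordered quasi-field of characteristic 1, addition is the
  maximum for the order u \<preceq> v \<longleftrightarrow> u + v = v, so a finite sum equals its largest term.
  Give the monomial X^m of P the weight  coeff P m * a^(m div n);  the coefficient of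
  X^r in phi P is then the maximum of the weights in the residue class r mod n.
  Call P balanced if every nonzero weight is dominated by the weight of another
  monomial of the same residue class.  The theorem follows from two equivalences:

  * star-singular \<longleftrightarrow> balanced: a splitting P = P1 + P2 with phi P1 = phi P2 forces
    the maximal weight of each class to occur in both parts; conversely, putting one
    maximiser of each class into P1 and the rest into P2 gives such a splitting.
  * balanced \<longleftrightarrow> in the ideal J: balanced polynomials are closed under sums and
    every multiple X^j (X^(nk) + a^k) is balanced; conversely each term of a balanced P
    lies in a binomial of J dominated coefficientwise by P, and P is the sum
    (i.e. the maximum) of these binomials.
*)

subsection \<open>The ideal J\<close>

abbreviation generators :: "'a::comm_semiring_1 \<Rightarrow> nat \<Rightarrow> 'a poly set" where
  "generators a n \<equiv> {monom 1 (n * k) + [:a ^ k:] | k. k \<ge> 1}"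

lemma monom_mult_generator:
  fixes b :: "'a::comm_semiring_1"
  shows "monom b j * (monom 1 (n * k) + [:a ^ k:]) = monom b (j + n * k) + monom (b * a ^ k) j"
proof -
  have "monom b j * [:a ^ k:] = monom (b * a ^ k) j"
    by (simp only: monom_0[symmetric] mult_monom add_0_right)
  then show ?thesis by (simp add: distrib_left mult_monom)
qed

lemma ideal_gen_zero: "0 \<in> ideal_gen S"
  unfolding ideal_gen_def by (intro CollectI exI[of _ "{}"]) auto

lemma ideal_gen_multiple: "g \<in> S \<Longrightarrow> c * g \<in> ideal_gen S"
  unfolding ideal_gen_def by (intro CollectI exI[of _ "{g}"] exI[of _ "\<lambda>_. c"]) auto

lemma ideal_gen_add:
  assumes "p \<in> ideal_gen S" "q \<in> ideal_gen S"
  shows "p + q \<in> ideal_gen S"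
proof -
  obtain F Q where F: "finite F" "F \<subseteq> S" and p: "p = (\<Sum>g\<in>F. Q g * g)"
    using assms(1) unfolding ideal_gen_def by blast
  obtain G R where G: "finite G" "G \<subseteq> S" and q: "q = (\<Sum>g\<in>G. R g * g)"
    using assms(2) unfolding ideal_gen_def by blast
  define Q' where "Q' g = (if g \<in> F then Q g else 0)" for g
  define R' where "R' g = (if g \<in> G then R g else 0)" for g
  have "p = (\<Sum>g\<in>F \<union> G. Q' g * g)"
    unfolding p by (rule sum.mono_neutral_cong_left) (simp_all add: F(1) G(1) Q'_def)
  moreover have "q = (\<Sum>g\<in>F \<union> G. R' g * g)"
    unfolding q by (rule sum.mono_neutral_cong_left) (simp_all add: F(1) G(1) R'_def)
  ultimately have "p + q = (\<Sum>g\<in>F \<union> G. (Q' g + R' g) * g)"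
    by (simp add: distrib_right sum.distrib)
  then show ?thesis
    unfolding ideal_gen_def using F G by (intro CollectI exI[of _ "F \<union> G"] exI[of _ "\<lambda>g. Q' g + R' g"]) auto
qed

lemma ideal_gen_sum:
  "finite A \<Longrightarrow> (\<And>x. x \<in> A \<Longrightarrow> f x \<in> ideal_gen S) \<Longrightarrow> sum f A \<in> ideal_gen S"
  by (induction A rule: finite_induct) (auto simp: ideal_gen_zero ideal_gen_add)

subsection \<open>Weights and balanced polynomials\<close>

text \<open>The weight of the monomial X^m of P; phi sends  coeff P m X^m  to  weight X^(m mod n).\<close>
definition weight :: "'a::comm_semiring_1 \<Rightarrow> nat \<Rightarrow> 'a poly \<Rightarrow> nat \<Rightarrow> 'a" where
  "weight a n P m = coeff P m * a ^ (m div n)"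

lemma weight_add: "weight a n (P + R) m = weight a n P m + weight a n R m"
  by (simp add: weight_def distrib_right)

lemma coeff_phi:
  assumes "degree P \<le> N"
  shows "coeff (phi a n P) r = (\<Sum>m | m \<le> N \<and> m mod n = r. weight a n P m)"
proof -
  have "coeff (phi a n P) r = (\<Sum>m\<le>degree P. if m mod n = r then weight a n P m else 0)"
    unfolding phi_def coeff_sum coeff_monom weight_def by (intro sum.cong) auto
  also have "\<dots> = (\<Sum>m\<le>N. if m mod n = r then weight a n P m else 0)"
    by (rule sum.mono_neutral_left) (use assms in \<open>auto simp: weight_def coeff_eq_0\<close>)
  also have "\<dots> = (\<Sum>m\<in>{m\<in>{..N}. m mod n = r}. weight a n P m)"
    by (rule sum.inter_filter[symmetric]) simp
  also have "{m\<in>{..N}. m mod n = r} = {m. m \<le> N \<and> m mod n = r}"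
    by auto
  finally show ?thesis .
qed

definition restrict_poly :: "nat set \<Rightarrow> 'a::comm_monoid_add poly \<Rightarrow> 'a poly" where
  "restrict_poly T P = (\<Sum>i\<le>degree P. monom (if i \<in> T then coeff P i else 0) i)"

lemma coeff_restrict_poly: "coeff (restrict_poly T P) j = (if j \<in> T then coeff P j else 0)"
  unfolding restrict_poly_def coeff_sum coeff_monom by (simp add: coeff_eq_0)

lemma degree_restrict_poly: "degree (restrict_poly T P) \<le> degree P"
  by (rule degree_le) (simp add: coeff_restrict_poly coeff_eq_0)

lemma restrict_poly_split: "P = restrict_poly T P + restrict_poly (- T) P"
  by (rule poly_eqI) (simp add: coeff_restrict_poly)

lemma monomials_restrict_poly_disjoint:
  "monomials (restrict_poly T P) \<inter> monomials (restrict_poly (- T) P) = {}"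
  by (auto simp: monomials_def coeff_restrict_poly)

lemma weight_restrict_poly:
  "weight a n (restrict_poly T P) m = (if m \<in> T then weight a n P m else 0)"
  by (simp add: weight_def coeff_restrict_poly)

definition prec :: "'a::plus \<Rightarrow> 'a \<Rightarrow> bool" (infix "\<preceq>" 50) where
  "x \<preceq> y \<longleftrightarrow> x + y = y"

definition balanced :: "'a::comm_semiring_1 \<Rightarrow> nat \<Rightarrow> 'a poly \<Rightarrow> bool" where
  "balanced a n P \<longleftrightarrow> (\<forall>m. weight a n P m \<noteq> 0 \<longrightarrow>
     (\<exists>m'. m' \<noteq> m \<and> m' mod n = m mod n \<and> weight a n P m \<preceq> weight a n P m'))"

subsection \<open>Arithmetic in a totally ordered quasi-field of characteristic 1\<close>

locale char1_ordered =
  fixes ty :: "'a::comm_semiring_1 itself"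
  assumes quasi_field: "quasi_field_char1 ty"
    and total: "totally_ordered_char1 ty"
begin

lemma inverse_exists: "(x::'a) \<noteq> 0 \<Longrightarrow> \<exists>y. x * y = 1"
  using quasi_field unfolding quasi_field_char1_def by blast

lemma add_idem: "(x::'a) + x = x"
proof -
  have "(1::'a) + 1 = 1" using quasi_field unfolding quasi_field_char1_def by blast
  then show ?thesis by (metis distrib_left mult_1_right)
qed

lemma add_prec_iff: "(x::'a) + y \<preceq> z \<longleftrightarrow> x \<preceq> z \<and> y \<preceq> z"
  unfolding prec_def by (metis add.assoc add.commute add_idem)

lemma prec_refl: "(x::'a) \<preceq> x"
  by (simp add: prec_def add_idem)

lemma prec_trans: "(x::'a) \<preceq> y \<Longrightarrow> y \<preceq> z \<Longrightarrow> x \<preceq> z"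
  unfolding prec_def by (metis add.assoc)

lemma prec_antisym: "(x::'a) \<preceq> y \<Longrightarrow> y \<preceq> x \<Longrightarrow> x = y"
  by (simp add: prec_def add.commute)

lemma zero_prec [simp]: "0 \<preceq> (x::'a)"
  by (simp add: prec_def)

lemma prec_zero_iff [simp]: "(x::'a) \<preceq> 0 \<longleftrightarrow> x = 0"
  by (simp add: prec_def)

lemma prec_add_left: "(x::'a) \<preceq> x + y"
  using add_prec_iff prec_refl by blast

lemma prec_add_right: "(y::'a) \<preceq> x + y"
  using add_prec_iff prec_refl by blast

lemma prec_mult_right: "(x::'a) \<preceq> y \<Longrightarrow> x * z \<preceq> y * z"
  unfolding prec_def by (metis distrib_right)

text \<open>Invertibility of nonzero elements excludes zero divisors.\<close>
lemma mult_nonzero: "(x::'a) \<noteq> 0 \<Longrightarrow> y \<noteq> 0 \<Longrightarrow> x * y \<noteq> 0"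
  by (metis inverse_exists mult.assoc mult.commute mult_1_left mult_zero_left)

lemma power_nonzero: "(x::'a) \<noteq> 0 \<Longrightarrow> x ^ k \<noteq> 0"
  by (induction k) (auto simp: mult_nonzero)

lemma prec_mult_cancel:
  assumes "(z::'a) \<noteq> 0" and "x * z \<preceq> y * z"
  shows "x \<preceq> y"
proof -
  obtain w where "z * w = 1" using inverse_exists assms(1) by blast
  with prec_mult_right[OF assms(2), of w] show ?thesis by (simp add: mult.assoc)
qed

lemma mult_cancel: "(z::'a) \<noteq> 0 \<Longrightarrow> x * z = y * z \<Longrightarrow> x = y"
  using prec_mult_cancel prec_antisym prec_refl by metis

lemma sum_prec_iff: "finite S \<Longrightarrow> sum f S \<preceq> (M::'a) \<longleftrightarrow> (\<forall>i\<in>S. f i \<preceq> M)"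
  by (induction S rule: finite_induct) (auto simp: add_prec_iff)

lemma term_prec_sum: "finite S \<Longrightarrow> i \<in> S \<Longrightarrow> (f i::'a) \<preceq> sum f S"
  using sum_prec_iff prec_refl by blast

lemma sum_attained: "finite S \<Longrightarrow> sum f S \<noteq> (0::'a) \<Longrightarrow> \<exists>i\<in>S. sum f S = f i"
proof (induction S rule: finite_induct)
  case (insert x F)
  then show ?case using total unfolding totally_ordered_char1_def
    by (cases "sum f F = 0") (auto, metis add.commute)
qed simp

lemma sum_eq_bound:
  assumes "finite S" "\<forall>i\<in>S. f i \<preceq> (M::'a)" "j \<in> S" "M \<preceq> f j"
  shows "sum f S = M"
  using assms sum_prec_iff term_prec_sum prec_antisym prec_trans by metis

lemma exists_maximiser:
  assumes "finite S" "S \<noteq> {}"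
  shows "\<exists>x\<in>S. \<forall>y\<in>S. (f y::'a) \<preceq> f x"
proof (cases "sum f S = 0")
  case True
  then show ?thesis using assms sum_prec_iff[of S f 0] by auto
next
  case False
  then show ?thesis using assms sum_attained term_prec_sum by metis
qed

subsection \<open>The elements of J are balanced\<close>

lemma balanced_add:
  fixes P R :: "'a poly"
  assumes "balanced a n P" "balanced a n R"
  shows "balanced a n (P + R)"
  unfolding balanced_def
proof (intro allI impI)
  fix m
  assume nonzero: "weight a n (P + R) m \<noteq> 0"
  text \<open>The weight of P + R at m is the larger of the two weights; follow that summand.\<close>
  consider "weight a n (P + R) m = weight a n P m" | "weight a n (P + R) m = weight a n R m"
    using total unfolding totally_ordered_char1_def weight_add by (metis add.commute)
  then show "\<exists>m'. m' \<noteq> m \<and> m' mod n = m mod n \<and> weight a n (P + R) m \<preceq> weight a n (P + R) m'"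
  proof cases
    case 1
    then obtain m' where "m' \<noteq> m" "m' mod n = m mod n" "weight a n P m \<preceq> weight a n P m'"
      using assms(1) nonzero unfolding balanced_def by metis
    then show ?thesis
      using 1 prec_add_left prec_trans unfolding weight_add by metis
  next
    case 2
    then obtain m' where "m' \<noteq> m" "m' mod n = m mod n" "weight a n R m \<preceq> weight a n R m'"
      using assms(2) nonzero unfolding balanced_def by metis
    then show ?thesis
      using 2 prec_add_right prec_trans unfolding weight_add by metis
  qed
qed

lemma balanced_sum:
  "finite A \<Longrightarrow> (\<And>x. x \<in> A \<Longrightarrow> balanced a n (f x :: 'a poly)) \<Longrightarrow> balanced a n (sum f A)"
proof (induction A rule: finite_induct)
  case empty
  then show ?case by (simp add: balanced_def weight_def)
next
  case (insert x A)
  then show ?case by (simp add: balanced_add)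
qed

text \<open>A monomial multiple of a generator is a binomial whose two weights coincide.\<close>
lemma balanced_monom_mult_generator:
  fixes b :: 'a
  assumes "n \<ge> 1" "k \<ge> 1"
  shows "balanced a n (monom b j * (monom 1 (n * k) + [:a ^ k:]))"
proof -
  let ?P = "monom b (j + n * k) + monom (b * a ^ k) j"
  have distinct: "j + n * k \<noteq> j" using assms by simp
  have same_class: "(j + n * k) mod n = j mod n" by simp
  have equal_weights: "weight a n ?P (j + n * k) = weight a n ?P j"
    using distinct assms by (simp add: weight_def power_add mult_ac)
  have support: "m = j + n * k \<or> m = j" if "weight a n ?P m \<noteq> 0" for m
  proof (rule ccontr)
    assume "\<not> (m = j + n * k \<or> m = j)"
    then have "coeff ?P m = 0" by (simp add: coeff_monom)
    then show False using that by (simp add: weight_def)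
  qed
  have "balanced a n ?P"
    unfolding balanced_def
  proof (intro allI impI)
    fix m
    assume "weight a n ?P m \<noteq> 0"
    then consider "m = j + n * k" | "m = j" using support by blast
    then show "\<exists>m'. m' \<noteq> m \<and> m' mod n = m mod n \<and> weight a n ?P m \<preceq> weight a n ?P m'"
    proof cases
      case 1
      then show ?thesis using distinct same_class equal_weights by (intro exI[of _ j]) (simp add: prec_refl)
    next
      case 2
      then show ?thesis using distinct same_class equal_weights by (intro exI[of _ "j + n * k"]) (simp add: prec_refl)
    qed
  qed
  then show ?thesis by (simp add: monom_mult_generator)
qed

text \<open>Every multiple of a generator is balanced, being a sum of monomial multiples.\<close>
lemma balanced_mult_generator:
  fixes Q :: "'a poly"
  assumes "n \<ge> 1" "k \<ge> 1"
  shows "balanced a n (Q * (monom 1 (n * k) + [:a ^ k:]))"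
proof -
  have "Q * (monom 1 (n * k) + [:a ^ k:]) =
      (\<Sum>i\<le>degree Q. monom (coeff Q i) i) * (monom 1 (n * k) + [:a ^ k:])"
    by (rule arg_cong[where f="\<lambda>p. p * _"]) (rule poly_as_sum_of_monoms[symmetric])
  also have "\<dots> = (\<Sum>i\<le>degree Q. monom (coeff Q i) i * (monom 1 (n * k) + [:a ^ k:]))"
    by (simp only: sum_distrib_right)
  finally show ?thesis
    by (simp only:) (rule balanced_sum[OF finite_atMost balanced_monom_mult_generator[OF assms]])
qed

lemma ideal_balanced:
  fixes P :: "'a poly"
  assumes "n \<ge> 1" "P \<in> ideal_gen (generators a n)"
  shows "balanced a n P"
proof -
  obtain F Q where F: "finite F" "F \<subseteq> generators a n" and P: "P = (\<Sum>g\<in>F. Q g * g)"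
    using assms(2) unfolding ideal_gen_def by blast
  have multiple_balanced: "balanced a n (Q g * g)" if "g \<in> F" for g
    using that F(2) balanced_mult_generator[OF assms(1)] by blast
  show ?thesis
    unfolding P by (rule balanced_sum[OF F(1) multiple_balanced])
qed

subsection \<open>Star-singular means balanced\<close>

text \<open>If phi P1 = phi P2, every nonzero weight of P1 is dominated by a weight of P2 in
  the same residue class: both sides of the equality are maxima over that class.\<close>
lemma weight_dominated_by_other_part:
  fixes P1 P2 :: "'a poly"
  assumes eq: "phi a n P1 = phi a n P2" and nonzero: "weight a n P1 m \<noteq> 0"
  shows "\<exists>m'. m' mod n = m mod n \<and> weight a n P1 m \<preceq> weight a n P2 m'"
proof -
  define N where "N = degree P1 + degree P2"
  define C where "C = {i. i \<le> N \<and> i mod n = m mod n}"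
  have sums: "coeff (phi a n P1) (m mod n) = sum (weight a n P1) C"
    "coeff (phi a n P2) (m mod n) = sum (weight a n P2) C"
    unfolding C_def by (rule coeff_phi, simp add: N_def)+
  have "coeff P1 m \<noteq> 0" using nonzero by (auto simp: weight_def)
  then have "m \<in> C" using le_degree unfolding C_def N_def by fastforce
  then have dominated: "weight a n P1 m \<preceq> sum (weight a n P2) C"
    using term_prec_sum[of C] sums eq by (simp add: C_def)
  then have "sum (weight a n P2) C \<noteq> 0" using nonzero by auto
  then obtain m' where "m' \<in> C" "sum (weight a n P2) C = weight a n P2 m'"
    using sum_attained[of C] C_def by auto
  then show ?thesis using dominated unfolding C_def by auto
qed

lemma dominated_in_splitting:
  fixes P Q1 Q2 :: "'a poly"
  assumes split: "P = Q1 + Q2" and disjoint: "\<forall>i. coeff Q1 i = 0 \<or> coeff Q2 i = 0"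
    and eq: "phi a n Q1 = phi a n Q2"
    and nonzero: "weight a n P m \<noteq> 0" and in_Q1: "coeff Q2 m = 0"
  shows "\<exists>m'. m' \<noteq> m \<and> m' mod n = m mod n \<and> weight a n P m \<preceq> weight a n P m'"
proof -
  have weight_P: "weight a n P i = weight a n Q1 i + weight a n Q2 i" for i
    unfolding split by (rule weight_add)
  have nonzero1: "weight a n Q1 m \<noteq> 0"
    using nonzero weight_P[of m] in_Q1 by (simp add: weight_def)
  then obtain m' where m': "m' mod n = m mod n" "weight a n Q1 m \<preceq> weight a n Q2 m'"
    using weight_dominated_by_other_part[OF eq] by blast
  then have "weight a n Q2 m' \<noteq> 0" using nonzero1 by auto
  then have "coeff Q2 m' \<noteq> 0" by (auto simp: weight_def)
  then have "coeff Q1 m' = 0" "m' \<noteq> m" using disjoint in_Q1 by auto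
  moreover have "weight a n P m = weight a n Q1 m" "weight a n P m' = weight a n Q2 m'"
    using weight_P[of m] weight_P[of m'] in_Q1 \<open>coeff Q1 m' = 0\<close> by (simp_all add: weight_def)
  ultimately show ?thesis using m' by auto
qed

lemma singular_balanced:
  fixes P :: "'a poly"
  assumes "star_singular (phi a n) P"
  shows "balanced a n P"
proof -
  obtain P1 P2 where split: "P = P1 + P2" and disjoint: "\<forall>i. coeff P1 i = 0 \<or> coeff P2 i = 0"
    and eq: "phi a n P1 = phi a n P2"
    using assms unfolding star_singular_def monomials_def by blast
  have split': "P = P2 + P1" and disjoint': "\<forall>i. coeff P2 i = 0 \<or> coeff P1 i = 0"
    using split disjoint by (simp_all add: add.commute disj_commute)
  show ?thesis
    unfolding balanced_def
  proof (intro allI impI)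
    fix m
    assume nonzero: "weight a n P m \<noteq> 0"
    show "\<exists>m'. m' \<noteq> m \<and> m' mod n = m mod n \<and> weight a n P m \<preceq> weight a n P m'"
    proof (cases "coeff P2 m = 0")
      case True
      then show ?thesis by (rule dominated_in_splitting[OF split disjoint eq nonzero])
    next
      case False
      then have "coeff P1 m = 0" using disjoint by blast
      then show ?thesis by (rule dominated_in_splitting[OF split' disjoint' eq[symmetric] nonzero])
    qed
  qed
qed

text \<open>Let t be a monomial of maximal weight M in a residue class C of a balanced P, and
  let T meet C exactly in t.  Then the weights of the parts of P on T and off T both
  have maximum M over C: the first contains t, the second a monomial dominating t.\<close>
lemma class_sums_agree:
  fixes P :: "'a poly"
  assumes bal: "balanced a n P"
    and C: "C = {m. m \<le> degree P \<and> m mod n = r}"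
    and top: "t \<in> C" "\<forall>m\<in>C. weight a n P m \<preceq> weight a n P t"
    and T: "\<forall>m\<in>C. m \<in> T \<longleftrightarrow> m = t"
  shows "sum (weight a n (restrict_poly T P)) C = sum (weight a n (restrict_poly (- T) P)) C"
proof -
  define M where "M = weight a n P t"
  have finite: "finite C" unfolding C by simp
  have bounded: "\<forall>m\<in>C. weight a n (restrict_poly U P) m \<preceq> M" for U
    using top(2) by (simp add: M_def weight_restrict_poly)
  have "sum (weight a n (restrict_poly T P)) C = M"
    using finite bounded[of T] top(1) T
    by (intro sum_eq_bound[where j = t]) (simp_all add: weight_restrict_poly M_def prec_refl)
  moreover have "sum (weight a n (restrict_poly (- T) P)) C = M"
  proof (cases "M = 0")
    case True
    then show ?thesis
      using finite bounded[of "- T"] top(1) by (intro sum_eq_bound[where j = t]) simp_all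
  next
    case False
    then obtain m' where m': "m' \<noteq> t" "m' mod n = r" "M \<preceq> weight a n P m'"
      using bal top(1) unfolding balanced_def M_def C by fastforce
    then have "coeff P m' \<noteq> 0" using False by (auto simp: weight_def)
    then have "m' \<in> C" using m'(2) le_degree unfolding C by blast
    moreover have "m' \<notin> T" using T m'(1) \<open>m' \<in> C\<close> by blast
    ultimately show ?thesis
      using finite bounded[of "- T"] m'(3)
      by (intro sum_eq_bound[where j = m']) (simp_all add: weight_restrict_poly)
  qed
  ultimately show ?thesis by simp
qed

text \<open>Balanced polynomials are star-singular: put one monomial of maximal weight of each
  residue class into P1 and the remaining monomials into P2.\<close>
lemma balanced_singular:
  fixes P :: "'a poly"
  assumes bal: "balanced a n P"
  shows "star_singular (phi a n) P"
proof -
  define C where "C r = {m. m \<le> degree P \<and> m mod n = r}" for r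
  have "finite (C r)" for r
    unfolding C_def by simp
  then have "\<forall>r. \<exists>t. C r \<noteq> {} \<longrightarrow> t \<in> C r \<and> (\<forall>m\<in>C r. weight a n P m \<preceq> weight a n P t)"
    using exists_maximiser by blast
  then obtain top where top: "\<And>r. C r \<noteq> {} \<Longrightarrow>
      top r \<in> C r \<and> (\<forall>m\<in>C r. weight a n P m \<preceq> weight a n P (top r))"
    by metis
  define T where "T = {m. top (m mod n) = m}"
  have "phi a n (restrict_poly T P) = phi a n (restrict_poly (- T) P)"
  proof (rule poly_eqI)
    fix r
    have "sum (weight a n (restrict_poly T P)) (C r) = sum (weight a n (restrict_poly (- T) P)) (C r)"
    proof (cases "C r = {}")
      case False
      have "\<forall>m\<in>C r. m \<in> T \<longleftrightarrow> m = top r"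
        unfolding C_def T_def by auto
      then show ?thesis
        using class_sums_agree[OF bal C_def] top[OF False] by blast
    qed simp
    then show "coeff (phi a n (restrict_poly T P)) r = coeff (phi a n (restrict_poly (- T) P)) r"
      unfolding C_def by (simp only: coeff_phi[OF degree_restrict_poly])
  qed
  then show ?thesis
    unfolding star_singular_def using restrict_poly_split monomials_restrict_poly_disjoint by blast
qed

subsection \<open>Balanced polynomials lie in J\<close>

text \<open>For a \<noteq> 0, a binomial  c X^m + d X^m'  with m < m' in the same residue class and
  equal weights is a monomial multiple of the generator X^(n(q'-q)) + a^(q'-q).\<close>
lemma binomial_in_ideal:
  fixes c d :: 'a
  assumes "a \<noteq> 0" "m < m'" "m mod n = m' mod n"
    and equal_weights: "d * a ^ (m' div n) = c * a ^ (m div n)"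
  shows "monom c m + monom d m' \<in> ideal_gen (generators a n)"
proof -
  have m: "m = n * (m div n) + m mod n"
    by simp
  have m': "m' = n * (m' div n) + m mod n"
    unfolding assms(3) by simp
  define k where "k = m' div n - m div n"
  have "m div n \<le> m' div n"
    using assms(2) by (simp add: div_le_mono)
  moreover have "m div n \<noteq> m' div n"
  proof
    assume "m div n = m' div n"
    then have "m' = m" using m m' by metis
    then show False using assms(2) by simp
  qed
  ultimately have k: "k \<ge> 1" "m' div n = m div n + k"
    by (auto simp: k_def)
  have m'_eq: "m' = m + n * k"
    using m m' k(2) by (simp add: distrib_left)
  have "(d * a ^ k) * a ^ (m div n) = c * a ^ (m div n)"
    using equal_weights k(2) by (simp add: power_add mult_ac)
  then have "d * a ^ k = c" using mult_cancel power_nonzero assms(1) by blast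
  then have "monom d m * (monom 1 (n * k) + [:a ^ k:]) = monom c m + monom d m'"
    by (simp add: monom_mult_generator m'_eq add.commute)
  moreover have "monom d m * (monom 1 (n * k) + [:a ^ k:]) \<in> ideal_gen (generators a n)"
    using k(1) by (intro ideal_gen_multiple) blast
  ultimately show ?thesis by simp
qed

text \<open>For a = 0 the generator X^n + a is the monomial X^n, and a balanced P has no
  nonzero coefficient below degree n (such a weight could not be dominated).\<close>
lemma term_in_ideal_if_zero:
  fixes P :: "'a poly"
  assumes bal: "balanced 0 n P" and nonzero: "coeff P m \<noteq> 0"
  shows "monom (coeff P m) m \<in> ideal_gen (generators 0 n)"
proof -
  have "n \<le> m"
  proof (rule ccontr)
    assume "\<not> n \<le> m"
    then have "weight 0 n P m \<noteq> 0" using nonzero by (simp add: weight_def)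
    then obtain m' where m': "m' \<noteq> m" "m' mod n = m mod n" "weight 0 n P m \<preceq> weight 0 n P m'"
      using bal unfolding balanced_def by blast
    have "m' div n \<noteq> 0"
    proof
      assume "m' div n = 0"
      then have "m' = m mod n" using m'(2) by (metis add_0 mult_0_right mult_div_mod_eq)
      then show False using m'(1) \<open>\<not> n \<le> m\<close> by simp
    qed
    then have "weight 0 n P m' = 0" by (simp add: weight_def zero_power)
    then show False using m'(3) \<open>weight 0 n P m \<noteq> 0\<close> by simp
  qed
  then have "monom (coeff P m) m = monom (coeff P m) (m - n) * (monom 1 (n * 1) + [:0 ^ 1:])"
    by (simp add: mult_monom)
  also have "\<dots> \<in> ideal_gen (generators 0 n)"
    by (intro ideal_gen_multiple) blast
  finally show ?thesis .
qed

text \<open>For a \<noteq> 0, each nonzero term  c X^m  of a balanced P completes to a binomial of J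
  dominated by P: take a monomial X^m' dominating X^m and the coefficient d giving
  d X^m' the weight of c X^m.\<close>
lemma dominated_binomial_in_ideal:
  fixes P :: "'a poly"
  assumes a: "a \<noteq> 0" and bal: "balanced a n P" and nonzero: "coeff P m \<noteq> 0"
  shows "\<exists>E\<in>ideal_gen (generators a n). coeff E m = coeff P m \<and> (\<forall>j. coeff E j \<preceq> coeff P j)"
proof -
  define c where "c = coeff P m"
  have "weight a n P m \<noteq> 0"
    using nonzero a by (simp add: weight_def mult_nonzero power_nonzero)
  then obtain m' where m': "m' \<noteq> m" "m' mod n = m mod n" "weight a n P m \<preceq> weight a n P m'"
    using bal unfolding balanced_def by blast
  obtain w where w: "a ^ (m' div n) * w = 1" using inverse_exists power_nonzero a by blast
  define d where "d = c * a ^ (m div n) * w"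
  have "d * a ^ (m' div n) = c * a ^ (m div n) * (a ^ (m' div n) * w)"
    by (simp add: d_def mult_ac)
  then have d_weight: "d * a ^ (m' div n) = c * a ^ (m div n)"
    using w by simp
  then have "d \<preceq> coeff P m'"
    using m'(3) prec_mult_cancel power_nonzero a by (metis c_def weight_def)
  moreover have "monom c m + monom d m' \<in> ideal_gen (generators a n)"
  proof (cases "m < m'")
    case True
    then show ?thesis using binomial_in_ideal a m'(2) d_weight by simp
  next
    case False
    then have "monom d m' + monom c m \<in> ideal_gen (generators a n)"
      using binomial_in_ideal a m'(1,2) d_weight by simp
    then show ?thesis by (simp add: add.commute)
  qed
  ultimately show ?thesis
    using m'(1) by (intro bexI[of _ "monom c m + monom d m'"]) (auto simp: c_def coeff_monom prec_refl)
qed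

lemma term_below_in_ideal:
  fixes P :: "'a poly"
  assumes bal: "balanced a n P"
  shows "\<exists>E\<in>ideal_gen (generators a n). coeff E m = coeff P m \<and> (\<forall>j. coeff E j \<preceq> coeff P j)"
proof (cases "coeff P m = 0")
  case True
  then show ?thesis using ideal_gen_zero by (intro bexI[of _ 0]) auto
next
  case nonzero: False
  show ?thesis
  proof (cases "a = 0")
    case True
    then show ?thesis
      using term_in_ideal_if_zero[of n P m] bal nonzero
      by (intro bexI[of _ "monom (coeff P m) m"]) (auto simp: coeff_monom prec_refl)
  next
    case False
    then show ?thesis using dominated_binomial_in_ideal bal nonzero by blast
  qed
qed

text \<open>Since addition is the maximum, a balanced P is the sum of these elements of J.\<close>
lemma balanced_in_ideal:
  fixes P :: "'a poly"
  assumes "balanced a n P"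
  shows "P \<in> ideal_gen (generators a n)"
proof -
  have "\<forall>m. \<exists>E. E \<in> ideal_gen (generators a n) \<and> coeff E m = coeff P m \<and>
      (\<forall>j. coeff E j \<preceq> coeff P j)"
    using term_below_in_ideal[OF assms] by blast
  then have "\<exists>E. \<forall>m. E m \<in> ideal_gen (generators a n) \<and> coeff (E m) m = coeff P m \<and>
      (\<forall>j. coeff (E m) j \<preceq> coeff P j)"
    by (rule choice)
  then obtain E where E: "\<And>m. E m \<in> ideal_gen (generators a n)"
    "\<And>m. coeff (E m) m = coeff P m" "\<And>m j. coeff (E m) j \<preceq> coeff P j"
    by blast
  have "P = (\<Sum>m\<le>degree P. E m)"
  proof (rule poly_eqI)
    fix j
    have "(\<Sum>m\<le>degree P. coeff (E m) j) \<preceq> coeff P j"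
      using E(3) by (simp add: sum_prec_iff)
    moreover have "coeff P j \<preceq> (\<Sum>m\<le>degree P. coeff (E m) j)"
    proof (cases "j \<le> degree P")
      case True
      then show ?thesis
        using term_prec_sum[of "{..degree P}" j "\<lambda>m. coeff (E m) j"] E(2)[of j] by simp
    next
      case False
      then show ?thesis by (simp add: coeff_eq_0)
    qed
    ultimately show "coeff P j = coeff (\<Sum>m\<le>degree P. E m) j"
      by (simp add: coeff_sum prec_antisym)
  qed
  also have "\<dots> \<in> ideal_gen (generators a n)"
    using E(1) by (simp add: ideal_gen_sum)
  finally show ?thesis .
qed

end

theorem lemma3p4:
  fixes a :: "'a::comm_semiring_1" and n :: nat and P :: "'a poly"
  assumes "quasi_field_char1 TYPE('a)"
    and "totally_ordered_char1 TYPE('a)"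
    and "n \<ge> 1"
  shows "star_singular (phi a n) P \<longleftrightarrow>
           P \<in> ideal_gen {monom 1 (n * k) + [:a ^ k:] | k. k \<ge> 1}"
proof -
  interpret char1_ordered "TYPE('a)"
    using assms(1,2) by unfold_locales
  have "star_singular (phi a n) P \<longleftrightarrow> balanced a n P"
    using singular_balanced balanced_singular by blast
  also have "\<dots> \<longleftrightarrow> P \<in> ideal_gen (generators a n)"
    using ideal_balanced[OF assms(3)] balanced_in_ideal by blast
  finally show ?thesis .
qed

end
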